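(* Let $x_0,\dots,x_q$ be complex numbers (repetitions allowed), $q\ge0$, $0\le j\le q$, and $\beta>0$. Then $$\int_0^{\beta/2}\tau\,e^{-\tau[x_j,\ldots,x_q]}\,e^{-(\beta-\tau)[x_0,\ldots,x_j]}\,\mathrm{d}\tau=\sum_{r=0}^{j}e^{-\frac{\beta}{2}[x_0,\ldots,x_r]}\sum_{m=j}^{q}e^{-\frac{\beta}{2}[x_r,\ldots,x_q,x_j,x_m]}.$$
   Context: For $t\in\mathbb{R}$ and numbers $y_0,\dots,y_p$ (repetitions allowed), $e^{t[y_0,\ldots,y_p]}$ denotes the divided difference of $f(x)=e^{tx}$, $f[y_0,\ldots,y_p]=\frac{1}{2\pi i}\oint_\Gamma\frac{f(x)}{\prod_{i=0}^p(x-y_i)}\,\mathrm{d}x$, $\Gamma$ a positively oriented contour enclosing all $y_i$. The multiset $[x_r,\ldots,x_q,x_j,x_m]$ consists of $x_r,\ldots,x_q$ together with one extra copy of $x_j$ and one extra copy of $x_m$. *)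

theory Defs
  imports "HOL-Complex_Analysis.Complex_Analysis"
begin

text \<open>Divided difference of f(x) = exp(t x) at the points ys (a list, repetitions allowed),
  defined by the contour integral over a positively oriented circle enclosing all points.\<close>
definition dd_exp :: "real \<Rightarrow> complex list \<Rightarrow> complex" where
  "dd_exp t ys =
     contour_integral (circlepath 0 (1 + sum_list (map norm ys)))
       (\<lambda>z. exp (complex_of_real t * z) / prod_list (map (\<lambda>y. z - y) ys))
     / (2 * complex_of_real pi * \<i>)"

end

theory Submission
  imports Defs
begin

(*
  Differentiating under the
  integral sign gives d/ds e^{s[ys,y]} = y e^{s[ys,y]} + e^{s[ys]}, and the length-times-maximum
  estimate on large circles gives e^{0[ys]} = 0 when ys has at least two nodes. Together with
  symmetry in the nodes, all identities needed follow from uniqueness for linear ODEs f' = c f + u: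

    e^{(s+t)[x_a..x_j]} = sum_{k=a..j} e^{s[x_a..x_k]} e^{t[x_k..x_j]}        (Leibniz rule)
    s e^{s[B]} = sum_{b in B} e^{s[B,b]}
    integral_0^T tau e^{-tau[B]} e^{(tau-T)[x_r..x_j]} dtau = sum_{b in B} e^{-T[x_r..x_j,B,b]}

  The last one is proved by induction on j: as functions of T both sides solve
  f' = -x_j f - g_{j-1}, where g_{j-1} is the right-hand side for j-1; for j = r this is
  sum_{b in B} e^{-T[B,b]} = -T e^{-T[B]} by the second identity. The theorem follows by splitting
  e^{-(beta-tau)[x_0..x_j]} at beta/2 with the Leibniz rule and taking B = [x_j..x_q], T = beta/2.
*)

lemma norm_le_sum_list_norm: "y \<in> set ys \<Longrightarrow> norm y \<le> sum_list (map norm ys)"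
proof (induction ys)
  case (Cons a ys)
  have "0 \<le> sum_list (map norm ys)" by (rule sum_list_nonneg) auto
  with Cons show ?case by (auto intro: add_increasing add_increasing2)
qed simp

lemma contour_integral_circlepath_radius_eq:
  assumes "f holomorphic_on {z. M < norm z}" and "M < R1" and "M < R2"
  shows "contour_integral (circlepath 0 R1) f = contour_integral (circlepath 0 R2) f"
proof -
  have "homotopic_loops {z. M < norm z} (circlepath 0 R1) (circlepath 0 R2)"
  proof (rule homotopic_loops_linear)
    fix t :: real
    show "closed_segment (circlepath 0 R1 t) (circlepath 0 R2 t) \<subseteq> {z. M < norm z}"
    proof
      fix w assume "w \<in> closed_segment (circlepath 0 R1 t) (circlepath 0 R2 t)"
      then obtain u where u: "0 \<le> u" "u \<le> 1"
        and w: "w = of_real ((1 - u) * R1 + u * R2) * exp (\<i> * of_real (2 * pi * t))"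
        by (auto simp: closed_segment_def circlepath scaleR_conv_of_real algebra_simps)
      have "norm w = \<bar>(1 - u) * R1 + u * R2\<bar>"
        unfolding w norm_mult norm_of_real norm_exp_i_times by simp
      moreover have "(1 - u) * (- R1) + u * (- R2) < - M"
        using u assms by (intro convex_bound_lt) auto
      ultimately show "w \<in> {z. M < norm z}"
        by (simp add: algebra_simps)
    qed
  qed auto
  then show ?thesis
    by (rule Cauchy_theorem_homotopic_loops[OF _ _ assms(1)]) (auto intro: open_Collect_less continuous_intros)
qed

lemma has_field_derivative_contour_integral_exp_circlepath:
  assumes "continuous_on (sphere c \<bar>r\<bar>) h"
  shows "((\<lambda>s. contour_integral (circlepath c r) (\<lambda>z. exp (s * z) * h z)) has_field_derivative
           contour_integral (circlepath c r) (\<lambda>z. z * exp (s * z) * h z)) (at s)"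
proof -
  let ?\<gamma> = "circlepath c r"
  define \<gamma>' where "\<gamma>' t = vector_derivative ?\<gamma> (at t)" for t
  have \<gamma>_cont: "continuous_on A ?\<gamma>" for A
    unfolding circlepath by (intro continuous_intros)
  have \<gamma>'_cont: "continuous_on A \<gamma>'" for A
    unfolding \<gamma>'_def vector_derivative_circlepath by (intro continuous_intros)
  have h\<gamma>_cont: "continuous_on {0..1} (\<lambda>t. h (?\<gamma> t))"
    using path_image_circlepath[of c r]
    by (intro continuous_on_compose2[OF assms \<gamma>_cont]) (auto simp: path_image_def)
  have h\<gamma>_cont2: "continuous_on (UNIV \<times> cbox 0 1) (\<lambda>p :: complex \<times> real. h (?\<gamma> (snd p)))"
    by (rule continuous_on_compose2[OF h\<gamma>_cont continuous_on_snd]) auto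
  have "((\<lambda>s. integral (cbox 0 1) (\<lambda>t. exp (s * ?\<gamma> t) * h (?\<gamma> t) * \<gamma>' t)) has_field_derivative
          integral (cbox 0 1) (\<lambda>t. ?\<gamma> t * exp (s * ?\<gamma> t) * h (?\<gamma> t) * \<gamma>' t)) (at s within UNIV)"
  proof (rule leibniz_rule_field_derivative)
    fix s :: complex and t :: real
    show "((\<lambda>s. exp (s * ?\<gamma> t) * h (?\<gamma> t) * \<gamma>' t) has_field_derivative
            ?\<gamma> t * exp (s * ?\<gamma> t) * h (?\<gamma> t) * \<gamma>' t) (at s within UNIV)"
      by (auto intro!: derivative_eq_intros)
  next
    fix s :: complex
    show "(\<lambda>t. exp (s * ?\<gamma> t) * h (?\<gamma> t) * \<gamma>' t) integrable_on cbox 0 1"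
      using h\<gamma>_cont by (auto simp: cbox_interval intro!: integrable_continuous_interval continuous_intros \<gamma>_cont \<gamma>'_cont)
  next
    show "continuous_on (UNIV \<times> cbox 0 1) (\<lambda>(s, t). ?\<gamma> t * exp (s * ?\<gamma> t) * h (?\<gamma> t) * \<gamma>' t)"
      unfolding case_prod_unfold
      by (intro continuous_intros h\<gamma>_cont2 continuous_on_compose2[OF \<gamma>_cont continuous_on_snd]
            continuous_on_compose2[OF \<gamma>'_cont continuous_on_snd]) auto
  qed auto
  then show ?thesis
    by (simp add: contour_integral_integral \<gamma>'_def cbox_interval)
qed

lemma has_field_derivative_sum_list:
  "(\<And>b. b \<in> set bs \<Longrightarrow> (f b has_field_derivative f' b) (at s)) \<Longrightarrow>
     ((\<lambda>s. \<Sum>b\<leftarrow>bs. f b s) has_field_derivative (\<Sum>b\<leftarrow>bs. f' b)) (at s)"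
  by (induction bs) (auto intro!: derivative_eq_intros)

lemma has_vector_derivative_sum_list:
  "(\<And>b. b \<in> set bs \<Longrightarrow> (f b has_vector_derivative f' b) (at t within S)) \<Longrightarrow>
     ((\<lambda>t. \<Sum>b\<leftarrow>bs. f b t) has_vector_derivative (\<Sum>b\<leftarrow>bs. f' b)) (at t within S)"
  by (induction bs) (auto intro!: derivative_eq_intros)

lemma linear_ode_solution_unique:
  fixes f g u :: "complex \<Rightarrow> complex"
  assumes "\<And>s. (f has_field_derivative c * f s + u s) (at s)"
    and "\<And>s. (g has_field_derivative c * g s + u s) (at s)"
    and "f 0 = g 0"
  shows "f s = g s"
proof -
  define d where "d s = exp (- c * s) * (f s - g s)" for s
  have "(d has_field_derivative 0) (at s within UNIV)" for s
  proof -
    have "(d has_field_derivative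
            exp (- c * s) * ((c * f s + u s) - (c * g s + u s)) + (- c) * exp (- c * s) * (f s - g s)) (at s)"
      unfolding d_def[abs_def] using assms(1,2) by (auto intro!: derivative_eq_intros)
    then show ?thesis
      by (simp add: algebra_simps)
  qed
  then obtain k where "\<forall>s\<in>UNIV. d s = k"
    using has_field_derivative_zero_constant[of UNIV d] by auto
  then have "d s = d 0"
    by simp
  then show ?thesis
    using assms(3) by (simp add: d_def)
qed

lemma linear_ode_solution_unique_on:
  fixes f g u :: "real \<Rightarrow> complex"
  assumes "\<And>t. t \<in> {0..T} \<Longrightarrow> (f has_vector_derivative c * f t + u t) (at t within {0..T})"
    and "\<And>t. t \<in> {0..T} \<Longrightarrow> (g has_vector_derivative c * g t + u t) (at t within {0..T})"
    and "f 0 = g 0" and "t \<in> {0..T}"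
  shows "f t = g t"
proof -
  define d where "d t = exp (- c * of_real t) * (f t - g t)" for t
  have "(d has_vector_derivative 0) (at t within {0..T})" if "t \<in> {0..T}" for t
  proof -
    have "((\<lambda>t. exp (- c * of_real t)) has_vector_derivative - c * exp (- c * of_real t)) (at t within {0..T})"
      by (rule has_vector_derivative_real_field) (auto intro!: derivative_eq_intros)
    from has_vector_derivative_mult[OF this has_vector_derivative_diff[OF assms(1,2)[OF that]]]
    show ?thesis
      unfolding d_def[abs_def] by (simp add: algebra_simps)
  qed
  then obtain k where "\<And>t. t \<in> {0..T} \<Longrightarrow> d t = k"
    using has_vector_derivative_zero_constant[of "{0..T}" d] by auto
  then have "d t = d 0"
    using assms(4) by auto
  then show ?thesis
    using assms(3) by (simp add: d_def)
qed

definition node_poly :: "complex list \<Rightarrow> complex \<Rightarrow> complex" where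
  "node_poly ys z = (\<Prod>y\<leftarrow>ys. z - y)"

lemma node_poly_eq_0_iff: "node_poly ys z = 0 \<longleftrightarrow> z \<in> set ys"
  by (induction ys) (auto simp: node_poly_def)

lemma node_poly_snoc: "node_poly (ys @ [y]) z = node_poly ys z * (z - y)"
  by (simp add: node_poly_def)

lemma node_poly_mset: "mset ys = mset zs \<Longrightarrow> node_poly ys = node_poly zs"
  unfolding node_poly_def by (metis mset_map prod_mset_prod_list)

lemma continuous_on_node_poly [continuous_intros]:
  "continuous_on A f \<Longrightarrow> continuous_on A (\<lambda>w. node_poly ys (f w))"
  by (induction ys) (auto simp: node_poly_def intro!: continuous_intros)

lemma holomorphic_on_node_poly [holomorphic_intros]:
  "f holomorphic_on A \<Longrightarrow> (\<lambda>w. node_poly ys (f w)) holomorphic_on A"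
  by (induction ys) (auto simp: node_poly_def intro!: holomorphic_intros)

lemma norm_node_poly_ge:
  assumes "\<And>y. y \<in> set ys \<Longrightarrow> a \<le> norm (z - y)" and "0 \<le> a"
  shows "a ^ length ys \<le> norm (node_poly ys z)"
  using assms
  by (induction ys) (auto simp: node_poly_def norm_mult intro!: mult_mono)

definition dd_cexp :: "complex \<Rightarrow> complex list \<Rightarrow> complex" where
  "dd_cexp s ys =
     contour_integral (circlepath 0 (1 + sum_list (map norm ys))) (\<lambda>z. exp (s * z) / node_poly ys z)
     / (2 * of_real pi * \<i>)"

lemma dd_exp_eq_dd_cexp: "dd_exp t ys = dd_cexp (of_real t) ys"
  by (simp add: dd_exp_def dd_cexp_def node_poly_def)

lemma dd_cexp_circlepath:
  assumes "\<And>y. y \<in> set ys \<Longrightarrow> norm y < R"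
  shows "dd_cexp s ys =
    contour_integral (circlepath 0 R) (\<lambda>z. exp (s * z) / node_poly ys z) / (2 * of_real pi * \<i>)"
proof -
  define R0 where "R0 = 1 + sum_list (map norm ys)"
  have "norm y < R0" if "y \<in> set ys" for y
    using norm_le_sum_list_norm[OF that] unfolding R0_def by simp
  define M where "M = Max (insert (min R R0 - 1) (norm ` set ys))"
  have M: "M < R" "M < R0" and norm_le_M: "\<And>y. y \<in> set ys \<Longrightarrow> norm y \<le> M"
    using assms \<open>\<And>y. y \<in> set ys \<Longrightarrow> norm y < R0\<close> by (auto simp: M_def Max_less_iff)
  have "(\<lambda>z. exp (s * z) / node_poly ys z) holomorphic_on {z. M < norm z}"
    by (intro holomorphic_intros) (auto simp: node_poly_eq_0_iff dest: norm_le_M)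
  from contour_integral_circlepath_radius_eq[OF this M(2,1)] show ?thesis
    unfolding dd_cexp_def R0_def[symmetric] by simp
qed

lemma dd_cexp_Nil: "dd_cexp s [] = 0"
proof -
  have "((\<lambda>z. exp (s * z) / node_poly [] z) has_contour_integral 0) (circlepath 0 1)"
    by (rule Cauchy_theorem_convex_simple[of _ UNIV]) (auto simp: node_poly_def intro!: holomorphic_intros)
  then show ?thesis
    by (simp add: dd_cexp_def contour_integral_unique)
qed

lemma dd_cexp_singleton: "dd_cexp s [y] = exp (s * y)"
proof -
  have "((\<lambda>z. exp (s * z) / (z - y)) has_contour_integral 2 * of_real pi * \<i> * exp (s * y))
          (circlepath 0 (1 + norm y))"
    by (rule Cauchy_integral_circlepath) (auto intro!: continuous_intros holomorphic_intros)
  then show ?thesis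
    by (simp add: dd_cexp_def node_poly_def contour_integral_unique)
qed

lemma dd_cexp_mset:
  assumes "mset ys = mset zs"
  shows "dd_cexp s ys = dd_cexp s zs"
proof -
  have "sum_list (map norm ys) = sum_list (map norm zs)"
    by (metis assms mset_map sum_mset_sum_list)
  then show ?thesis
    by (simp add: dd_cexp_def node_poly_mset[OF assms])
qed

lemma dd_cexp_snoc_has_field_derivative:
  "((\<lambda>s. dd_cexp s (ys @ [y])) has_field_derivative y * dd_cexp s (ys @ [y]) + dd_cexp s ys) (at s)"
proof -
  define R where "R = 1 + sum_list (map norm (ys @ [y]))"
  have inside: "norm w < R" if "w \<in> set (ys @ [y])" for w
    using norm_le_sum_list_norm[OF that] by (simp add: R_def)
  then have "0 < R"
    by (meson le_less_trans norm_ge_zero in_set_conv_decomp)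
  have off_circle: "z \<notin> set ys" "z \<noteq> y" if "norm z = R" for z
    using inside that by fastforce+
  let ?C = "\<lambda>f. contour_integral (circlepath 0 R) f / (2 * of_real pi * \<i>)"
  let ?f = "\<lambda>zs s z. exp (s * z) / node_poly zs z"
  have dd_snoc: "dd_cexp s' (ys @ [y]) = ?C (?f (ys @ [y]) s')" for s'
    unfolding dd_cexp_def R_def ..
  have dd: "dd_cexp s ys = ?C (?f ys s)"
    using inside by (intro dd_cexp_circlepath) auto
  have integrable: "?f ys s contour_integrable_on circlepath 0 R"
    "?f (ys @ [y]) s contour_integrable_on circlepath 0 R"
    using off_circle \<open>0 < R\<close>
    by (intro contour_integrable_continuous_circlepath continuous_intros; auto simp: node_poly_eq_0_iff)+
  have "((\<lambda>s. contour_integral (circlepath 0 R) (\<lambda>z. exp (s * z) * (1 / node_poly (ys @ [y]) z)))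
          has_field_derivative
          contour_integral (circlepath 0 R) (\<lambda>z. z * exp (s * z) * (1 / node_poly (ys @ [y]) z))) (at s)"
    using off_circle \<open>0 < R\<close>
    by (intro has_field_derivative_contour_integral_exp_circlepath continuous_intros)
       (auto simp: node_poly_eq_0_iff)
  then have "((\<lambda>s. dd_cexp s (ys @ [y])) has_field_derivative
               ?C (\<lambda>z. z * exp (s * z) / node_poly (ys @ [y]) z)) (at s)"
    unfolding dd_snoc by (auto intro: DERIV_cdivide)
  also have "contour_integral (circlepath 0 R) (\<lambda>z. z * exp (s * z) / node_poly (ys @ [y]) z)
      = contour_integral (circlepath 0 R) (\<lambda>z. y * ?f (ys @ [y]) s z + ?f ys s z)"
  proof (rule contour_integral_eq)
    fix z assume "z \<in> path_image (circlepath 0 R)"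
    then have "z \<notin> set (ys @ [y])"
      using off_circle \<open>0 < R\<close> by auto
    then show "z * exp (s * z) / node_poly (ys @ [y]) z = y * ?f (ys @ [y]) s z + ?f ys s z"
      by (simp add: node_poly_snoc node_poly_eq_0_iff field_simps)
  qed
  also have "\<dots> = y * contour_integral (circlepath 0 R) (?f (ys @ [y]) s)
                  + contour_integral (circlepath 0 R) (?f ys s)"
    using integrable by (simp only: contour_integral_add contour_integrable_lmul contour_integral_lmul)
  finally show ?thesis
    unfolding dd dd_snoc by (simp add: add_divide_distrib)
qed

lemma norm_dd_cexp_zero_le:
  assumes "2 \<le> length ys" and R: "1 + sum_list (map norm ys) \<le> R / 2"
  shows "norm (dd_cexp 0 ys) \<le> 4 / R"
proof -
  define S where "S = sum_list (map norm ys)"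
  have "0 \<le> S"
    unfolding S_def by (rule sum_list_nonneg) auto
  note R = R[folded S_def]
  have inside: "norm y < R" if "y \<in> set ys" for y
    using norm_le_sum_list_norm[OF that] R \<open>0 \<le> S\<close> unfolding S_def by linarith
  have "(R / 2) ^ 2 \<le> norm (node_poly ys z)" if "norm z = R" for z
  proof -
    have "R / 2 \<le> norm (z - y)" if "y \<in> set ys" for y
      using norm_triangle_ineq2[of z y] norm_le_sum_list_norm[OF that] \<open>norm z = R\<close> R
      unfolding S_def by linarith
    then have "(R / 2) ^ length ys \<le> norm (node_poly ys z)"
      using R \<open>0 \<le> S\<close> by (intro norm_node_poly_ge) auto
    moreover have "(R / 2) ^ 2 \<le> (R / 2) ^ length ys"
      using assms R \<open>0 \<le> S\<close> by (intro power_increasing) auto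
    ultimately show ?thesis
      by linarith
  qed
  moreover have "0 < (R / 2) ^ 2"
    using R \<open>0 \<le> S\<close> by simp
  ultimately have integrand_bound: "norm (1 / node_poly ys z) \<le> 4 / R ^ 2" if "norm z = R" for z
    using le_imp_inverse_le[of "(R / 2) ^ 2" "norm (node_poly ys z)"] that
    by (simp add: norm_divide inverse_eq_divide power_divide)
  have "((\<lambda>z. 1 / node_poly ys z) has_contour_integral
          contour_integral (circlepath 0 R) (\<lambda>z. 1 / node_poly ys z)) (circlepath 0 R)"
    using inside R \<open>0 \<le> S\<close>
    by (intro has_contour_integral_integral contour_integrable_continuous_circlepath continuous_intros)
       (force simp: node_poly_eq_0_iff)
  then have integral_bound:
      "norm (contour_integral (circlepath 0 R) (\<lambda>z. 1 / node_poly ys z)) \<le> 4 / R ^ 2 * (2 * pi * R)"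
    by (rule has_contour_integral_bound_circlepath) (use R \<open>0 \<le> S\<close> integrand_bound in auto)
  have "norm (dd_cexp 0 ys) = norm (contour_integral (circlepath 0 R) (\<lambda>z. 1 / node_poly ys z)) / (2 * pi)"
    using dd_cexp_circlepath[of ys R 0] inside by (simp add: norm_divide norm_mult)
  also have "\<dots> \<le> 4 / R ^ 2 * (2 * pi * R) / (2 * pi)"
    by (rule divide_right_mono[OF integral_bound]) simp
  also have "\<dots> = 4 / R"
    using R \<open>0 \<le> S\<close> by (simp add: field_simps power2_eq_square)
  finally show ?thesis .
qed

lemma dd_cexp_zero:
  assumes "2 \<le> length ys"
  shows "dd_cexp 0 ys = 0"
proof -
  define S where "S = sum_list (map norm ys)"
  have "0 \<le> S"
    unfolding S_def by (rule sum_list_nonneg) auto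
  have "norm (dd_cexp 0 ys) \<le> 0 + e" if "0 < e" for e
  proof -
    define R where "R = max (2 * (1 + S)) (4 / e)"
    have "1 + S \<le> R / 2" "4 / e \<le> R" "0 < R"
      unfolding R_def using \<open>0 \<le> S\<close> by auto
    then have "4 / R \<le> e"
      using \<open>0 < e\<close> by (simp add: field_simps)
    then show ?thesis
      using norm_dd_cexp_zero_le[OF assms, of R] \<open>1 + S \<le> R / 2\<close> unfolding S_def by simp
  qed
  then show ?thesis
    using field_le_epsilon[of "norm (dd_cexp 0 ys)" 0] by simp
qed

lemma isCont_dd_cexp: "isCont (\<lambda>s. dd_cexp s ys) s"
  by (cases ys rule: rev_cases)
     (auto simp: dd_cexp_Nil intro: DERIV_isCont dd_cexp_snoc_has_field_derivative)

lemma continuous_on_dd_cexp [continuous_intros]: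
  "continuous_on A f \<Longrightarrow> continuous_on A (\<lambda>t. dd_cexp (f t) ys)"
  using continuous_on_compose2[of UNIV "\<lambda>s. dd_cexp s ys" A f] isCont_dd_cexp
  by (auto intro: continuous_at_imp_continuous_on)

lemma dd_cexp_upt_has_field_derivative:
  assumes "k \<le> m"
  shows "((\<lambda>s. dd_cexp s (map x [k..<Suc m])) has_field_derivative
           x m * dd_cexp s (map x [k..<Suc m]) + dd_cexp s (map x [k..<m])) (at s)"
  using dd_cexp_snoc_has_field_derivative[of "map x [k..<m]" "x m"] assms by simp

lemma dd_cexp_insert_has_field_derivative:
  "((\<lambda>s. dd_cexp s (as @ a # cs)) has_field_derivative
     a * dd_cexp s (as @ a # cs) + dd_cexp s (as @ cs)) (at s)"
proof -
  have "dd_cexp s (as @ a # cs) = dd_cexp s ((as @ cs) @ [a])" for s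
    by (rule dd_cexp_mset) simp
  then show ?thesis
    using dd_cexp_snoc_has_field_derivative[of "as @ cs" a] by simp
qed

lemma dd_cexp_neg_insert_has_vector_derivative:
  "((\<lambda>t. dd_cexp (- of_real t) (as @ a # cs)) has_vector_derivative
     - (a * dd_cexp (- of_real t) (as @ a # cs) + dd_cexp (- of_real t) (as @ cs))) (at t within S)"
proof -
  have "((\<lambda>s. dd_cexp (- s) (as @ a # cs)) has_field_derivative
          (a * dd_cexp (- s) (as @ a # cs) + dd_cexp (- s) (as @ cs)) * (- 1)) (at s)" for s
    by (rule DERIV_chain2[OF dd_cexp_insert_has_field_derivative]) (auto intro!: derivative_eq_intros)
  from has_vector_derivative_real_field[OF this] show ?thesis
    by simp
qed

lemma sum_list_dd_cexp_neg_insert_has_vector_derivative: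
  "((\<lambda>t. \<Sum>b\<leftarrow>bs. dd_cexp (- of_real t) (as @ a # bs @ [b])) has_vector_derivative
     - a * (\<Sum>b\<leftarrow>bs. dd_cexp (- of_real t) (as @ a # bs @ [b]))
     - (\<Sum>b\<leftarrow>bs. dd_cexp (- of_real t) (as @ bs @ [b]))) (at t within S)"
proof -
  have "((\<lambda>t. \<Sum>b\<leftarrow>bs. dd_cexp (- of_real t) (as @ a # bs @ [b])) has_vector_derivative
      (\<Sum>b\<leftarrow>bs. - (a * dd_cexp (- of_real t) (as @ a # bs @ [b]) + dd_cexp (- of_real t) (as @ bs @ [b]))))
      (at t within S)"
    by (intro has_vector_derivative_sum_list dd_cexp_neg_insert_has_vector_derivative)
  then show ?thesis
    by (simp add: sum_list_subtractf uminus_sum_list_map o_def flip: sum_list_const_mult)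
qed

lemma dd_cexp_add:
  assumes "a \<le> j"
  shows "dd_cexp (s + t) (map x [a..<Suc j]) =
           (\<Sum>k=a..j. dd_cexp s (map x [a..<Suc k]) * dd_cexp t (map x [k..<Suc j]))"
  using assms
proof (induction j arbitrary: t rule: dec_induct)
  case base
  then show ?case
    by (simp add: dd_cexp_singleton distrib_right exp_add)
next
  case (step n)
  define f where "f t = dd_cexp (s + t) (map x [a..<Suc (Suc n)])" for t
  define g where "g t = (\<Sum>k=a..Suc n. dd_cexp s (map x [a..<Suc k]) * dd_cexp t (map x [k..<Suc (Suc n)]))" for t
  define u where "u t = dd_cexp (s + t) (map x [a..<Suc n])" for t
  have "(f has_field_derivative (x (Suc n) * f t + u t) * 1) (at t)" for t
    unfolding f_def[abs_def] u_def
    by (rule DERIV_chain2[OF dd_cexp_upt_has_field_derivative])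
       (use step.hyps in \<open>auto intro!: derivative_eq_intros\<close>)
  then have "(f has_field_derivative x (Suc n) * f t + u t) (at t)" for t
    by simp
  moreover have "(g has_field_derivative x (Suc n) * g t + u t) (at t)" for t
  proof -
    have "(g has_field_derivative (\<Sum>k=a..Suc n. dd_cexp s (map x [a..<Suc k]) *
            (x (Suc n) * dd_cexp t (map x [k..<Suc (Suc n)]) + dd_cexp t (map x [k..<Suc n])))) (at t)"
      unfolding g_def[abs_def] by (intro DERIV_sum DERIV_cmult dd_cexp_upt_has_field_derivative) auto
    moreover have "(\<Sum>k=a..Suc n. dd_cexp s (map x [a..<Suc k]) * dd_cexp t (map x [k..<Suc n])) = u t"
      using step by (simp add: u_def sum.nat_ivl_Suc' dd_cexp_Nil)
    moreover have "(\<Sum>k=a..Suc n. dd_cexp s (map x [a..<Suc k]) *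
            (x (Suc n) * dd_cexp t (map x [k..<Suc (Suc n)]) + dd_cexp t (map x [k..<Suc n])))
        = x (Suc n) * g t + (\<Sum>k=a..Suc n. dd_cexp s (map x [a..<Suc k]) * dd_cexp t (map x [k..<Suc n]))"
      by (simp add: g_def distrib_left sum.distrib sum_distrib_left mult.left_commute del: upt_Suc)
    ultimately show ?thesis
      by simp
  qed
  moreover have "f 0 = g 0"
  proof -
    have "dd_cexp 0 (map x [k..<Suc (Suc n)]) = 0" if "k \<le> n" for k
      using that by (intro dd_cexp_zero) auto
    moreover have "map x [Suc n..<Suc (Suc n)] = [x (Suc n)]"
      by simp
    ultimately show ?thesis
      using step.hyps by (simp add: f_def g_def sum.nat_ivl_Suc' dd_cexp_singleton del: upt_Suc)
  qed
  ultimately have "f t = g t"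
    by (rule linear_ode_solution_unique)
  then show ?case
    by (simp add: f_def g_def)
qed

lemma mult_dd_cexp_eq_sum_list:
  "s * dd_cexp s ys = (\<Sum>y\<leftarrow>ys. dd_cexp s (ys @ [y]))"
proof (induction ys arbitrary: s rule: rev_induct)
  case Nil
  then show ?case
    by (simp add: dd_cexp_Nil)
next
  case (snoc y ys)
  define f where "f s = s * dd_cexp s (ys @ [y])" for s
  define g where "g s = (\<Sum>b\<leftarrow>ys @ [y]. dd_cexp s ((ys @ [b]) @ [y]))" for s
  define u where "u s = dd_cexp s (ys @ [y]) + s * dd_cexp s ys" for s
  have "(f has_field_derivative y * f s + u s) (at s)" for s
  proof -
    have "(f has_field_derivative 1 * dd_cexp s (ys @ [y]) + (y * dd_cexp s (ys @ [y]) + dd_cexp s ys) * s) (at s)"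
      unfolding f_def[abs_def] by (intro DERIV_mult DERIV_ident dd_cexp_snoc_has_field_derivative)
    then show ?thesis
      by (simp add: f_def u_def algebra_simps)
  qed
  moreover have "(g has_field_derivative y * g s + u s) (at s)" for s
  proof -
    have "(g has_field_derivative (\<Sum>b\<leftarrow>ys @ [y]. y * dd_cexp s ((ys @ [b]) @ [y]) + dd_cexp s (ys @ [b]))) (at s)"
      unfolding g_def[abs_def] by (intro has_field_derivative_sum_list dd_cexp_snoc_has_field_derivative)
    moreover have "(\<Sum>b\<leftarrow>ys @ [y]. y * dd_cexp s ((ys @ [b]) @ [y]) + dd_cexp s (ys @ [b])) = y * g s + u s"
      using snoc.IH[of s] by (simp add: g_def u_def sum_list_addf sum_list_const_mult algebra_simps)
    ultimately show ?thesis
      by simp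
  qed
  moreover have "f 0 = g 0"
    by (simp add: f_def g_def dd_cexp_zero del: append_assoc)
  ultimately have "f s = g s"
    by (rule linear_ode_solution_unique)
  moreover have "g s = (\<Sum>b\<leftarrow>ys @ [y]. dd_cexp s ((ys @ [y]) @ [b]))"
    unfolding g_def by (intro arg_cong[where f = sum_list] map_cong refl dd_cexp_mset) simp
  ultimately show ?case
    by (simp add: f_def)
qed

definition weighted_convolution :: "complex list \<Rightarrow> complex list \<Rightarrow> real \<Rightarrow> complex" where
  "weighted_convolution bs as T =
     integral {0..T} (\<lambda>\<tau>. of_real \<tau> * dd_cexp (- of_real \<tau>) bs * dd_cexp (of_real \<tau> - of_real T) as)"

lemma weighted_convolution_Nil: "weighted_convolution bs [] T = 0"
  by (simp add: weighted_convolution_def dd_cexp_Nil)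

(* The Leibniz rule moves all dependence on T out of the integrands, so that
   weighted_convolution can be differentiated in T by the fundamental theorem of calculus. *)
lemma weighted_convolution_expand:
  assumes "r \<le> j"
  shows "weighted_convolution bs (map x [r..<Suc j]) T =
    (\<Sum>k=r..j. dd_cexp (- of_real T) (map x [k..<Suc j]) *
       integral {0..T} (\<lambda>\<tau>. of_real \<tau> * dd_cexp (- of_real \<tau>) bs * dd_cexp (of_real \<tau>) (map x [r..<Suc k])))"
proof -
  have "of_real \<tau> * dd_cexp (- of_real \<tau>) bs * dd_cexp (of_real \<tau> - of_real T) (map x [r..<Suc j]) =
    (\<Sum>k=r..j. dd_cexp (- of_real T) (map x [k..<Suc j]) *
       (of_real \<tau> * dd_cexp (- of_real \<tau>) bs * dd_cexp (of_real \<tau>) (map x [r..<Suc k])))" for \<tau>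
    using dd_cexp_add[OF assms, where x = x and s = "of_real \<tau>" and t = "- of_real T"]
    by (simp add: sum_distrib_left algebra_simps)
  then show ?thesis
    unfolding weighted_convolution_def
    by (simp add: integral_sum integrable_continuous_interval continuous_intros)
qed

lemma weighted_convolution_has_vector_derivative:
  assumes "r \<le> j" and "t \<in> {0..T}"
  shows "(weighted_convolution bs (map x [r..<Suc j]) has_vector_derivative
           - x j * weighted_convolution bs (map x [r..<Suc j]) t
           + of_real t * dd_cexp (- of_real t) bs * dd_cexp 0 (map x [r..<Suc j])
           - weighted_convolution bs (map x [r..<j]) t) (at t within {0..T})"
proof -
  let ?J = "\<lambda>k t. integral {0..t}
              (\<lambda>\<tau>. of_real \<tau> * dd_cexp (- of_real \<tau>) bs * dd_cexp (of_real \<tau>) (map x [r..<Suc k]))"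
  let ?G = "\<lambda>k t. dd_cexp (- of_real t) (map x [k..<Suc j])"
  let ?H = "\<lambda>k t. dd_cexp (- of_real t) (map x [k..<j])"
  have J': "(?J k has_vector_derivative
              of_real t * dd_cexp (- of_real t) bs * dd_cexp (of_real t) (map x [r..<Suc k])) (at t within {0..T})" for k
    by (rule integral_has_vector_derivative[OF _ assms(2)]) (intro continuous_intros)
  have G': "(?G k has_vector_derivative - (x j * ?G k t + ?H k t)) (at t within {0..T})" if "k \<le> j" for k
    using dd_cexp_neg_insert_has_vector_derivative[of "map x [k..<j]" "x j" "[]"] that by simp
  have expand: "weighted_convolution bs (map x [r..<Suc j]) = (\<lambda>t. \<Sum>k=r..j. ?G k t * ?J k t)"
    using weighted_convolution_expand[OF assms(1)] by fast
  have "(weighted_convolution bs (map x [r..<Suc j]) has_vector_derivative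
          (\<Sum>k=r..j. ?G k t * (of_real t * dd_cexp (- of_real t) bs * dd_cexp (of_real t) (map x [r..<Suc k]))
                      + - (x j * ?G k t + ?H k t) * ?J k t)) (at t within {0..T})"
    unfolding expand by (intro has_vector_derivative_sum has_vector_derivative_mult J' G') auto
  moreover have "(\<Sum>k=r..j. ?G k t * (of_real t * dd_cexp (- of_real t) bs * dd_cexp (of_real t) (map x [r..<Suc k]))
                      + - (x j * ?G k t + ?H k t) * ?J k t)
      = - x j * (\<Sum>k=r..j. ?G k t * ?J k t)
        + of_real t * dd_cexp (- of_real t) bs * (\<Sum>k=r..j. dd_cexp (of_real t) (map x [r..<Suc k]) * ?G k t)
        - (\<Sum>k=r..j. ?H k t * ?J k t)"
    by (simp add: sum.distrib sum_subtractf sum_negf sum_distrib_left algebra_simps del: upt_Suc)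
  moreover have "(\<Sum>k=r..j. dd_cexp (of_real t) (map x [r..<Suc k]) * ?G k t) = dd_cexp 0 (map x [r..<Suc j])"
    using dd_cexp_add[OF assms(1), where x = x and s = "of_real t" and t = "- of_real t"] by simp
  moreover have "(\<Sum>k=r..j. ?H k t * ?J k t) = weighted_convolution bs (map x [r..<j]) t"
  proof (cases "j = r")
    case True
    then show ?thesis
      by (simp add: dd_cexp_Nil weighted_convolution_Nil)
  next
    case False
    then obtain n where "j = Suc n" "r \<le> n"
      using assms(1) by (cases j) auto
    then show ?thesis
      by (simp add: sum.nat_ivl_Suc' dd_cexp_Nil weighted_convolution_expand del: upt_Suc)
  qed
  ultimately show ?thesis
    by (simp add: expand del: upt_Suc)
qed

lemma weighted_convolution_eq_sum_list:
  assumes "r \<le> j" and "0 \<le> T"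
  shows "weighted_convolution bs (map x [r..<Suc j]) T =
           (\<Sum>b\<leftarrow>bs. dd_cexp (- of_real T) (map x [r..<Suc j] @ bs @ [b]))"
  using assms
proof (induction j arbitrary: T rule: less_induct)
  case (less j)
  define V where "V as t = (\<Sum>b\<leftarrow>bs. dd_cexp (- of_real t) (as @ bs @ [b]))" for as t
  have forcing: "of_real t * dd_cexp (- of_real t) bs * dd_cexp 0 (map x [r..<Suc j])
                   - weighted_convolution bs (map x [r..<j]) t = - V (map x [r..<j]) t"
    if "t \<in> {0..T}" for t
  proof (cases "j = r")
    case True
    have "- V [] t = of_real t * dd_cexp (- of_real t) bs"
      unfolding V_def append_Nil by (subst mult_dd_cexp_eq_sum_list[symmetric]) simp
    with True show ?thesis
      by (simp add: weighted_convolution_Nil dd_cexp_singleton)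
  next
    case False
    then obtain n where "j = Suc n" "r \<le> n"
      using less.prems(1) by (cases j) auto
    moreover have "dd_cexp 0 (map x [r..<Suc j]) = 0"
      using \<open>j = Suc n\<close> \<open>r \<le> n\<close> by (intro dd_cexp_zero) auto
    ultimately show ?thesis
      using less.IH[of n t] that by (simp add: V_def del: upt_Suc)
  qed
  have V': "(V (map x [r..<Suc j]) has_vector_derivative
              - x j * V (map x [r..<Suc j]) t - V (map x [r..<j]) t) (at t within {0..T})" for t
    using sum_list_dd_cexp_neg_insert_has_vector_derivative[where as = "map x [r..<j]" and a = "x j"]
      less.prems(1)
    by (simp add: V_def[abs_def])
  have "weighted_convolution bs (map x [r..<Suc j]) T = V (map x [r..<Suc j]) T"
  proof (rule linear_ode_solution_unique_on[where c = "- x j" and u = "\<lambda>t. - V (map x [r..<j]) t"])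
    fix t assume t: "t \<in> {0..T}"
    show "(weighted_convolution bs (map x [r..<Suc j]) has_vector_derivative
            - x j * weighted_convolution bs (map x [r..<Suc j]) t + - V (map x [r..<j]) t) (at t within {0..T})"
      by (rule has_vector_derivative_eq_rhs
            [OF weighted_convolution_has_vector_derivative[OF less.prems(1) t, where bs = bs and x = x]])
         (simp only: add_diff_eq[symmetric] forcing[OF t])
    show "(V (map x [r..<Suc j]) has_vector_derivative
            - x j * V (map x [r..<Suc j]) t + - V (map x [r..<j]) t) (at t within {0..T})"
      using V' by simp
  next
    have "dd_cexp 0 (map x [r..<Suc j] @ bs @ [b]) = 0" for b
      using less.prems(1) by (intro dd_cexp_zero) simp
    then show "weighted_convolution bs (map x [r..<Suc j]) 0 = V (map x [r..<Suc j]) 0"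
      by (simp add: weighted_convolution_def V_def del: upt_Suc)
  qed (use less.prems in auto)
  then show ?case
    by (simp add: V_def)
qed

lemma weighted_convolution_upt_overlap:
  assumes "r \<le> j" and "j \<le> q" and "0 \<le> T"
  shows "weighted_convolution (map x [j..<Suc q]) (map x [r..<Suc j]) T =
           (\<Sum>m=j..q. dd_cexp (- of_real T) (map x [r..<Suc q] @ [x j, x m]))"
proof -
  have "dd_cexp s (map x [r..<Suc j] @ map x [j..<Suc q] @ [x m]) =
          dd_cexp s (map x [r..<Suc q] @ [x j, x m])" for s m
  proof (rule dd_cexp_mset)
    have "[r..<Suc j] = [r..<j] @ [j]" "[r..<Suc q] = [r..<j] @ [j..<Suc q]"
      using assms upt_add_eq_append[of r j "Suc q - j"] by simp_all
    then show "mset (map x [r..<Suc j] @ map x [j..<Suc q] @ [x m]) = mset (map x [r..<Suc q] @ [x j, x m])"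
      by (simp add: add_ac)
  qed
  then show ?thesis
    using assms
    by (simp add: weighted_convolution_eq_sum_list interv_sum_list_conv_sum_set_nat
          atLeastLessThanSuc_atLeastAtMost del: upt_Suc)
qed

theorem corollary2:
  fixes x :: "nat \<Rightarrow> complex" and q j :: nat and \<beta> :: real
  assumes "j \<le> q" and "\<beta> > 0"
  shows "integral {0..\<beta>/2}
           (\<lambda>\<tau>. complex_of_real \<tau> * dd_exp (-\<tau>) (map x [j..<Suc q])
                 * dd_exp (-(\<beta> - \<tau>)) (map x [0..<Suc j]))
       = (\<Sum>r=0..j. dd_exp (-(\<beta>/2)) (map x [0..<Suc r])
            * (\<Sum>m=j..q. dd_exp (-(\<beta>/2)) (map x [r..<Suc q] @ [x j, x m])))"
proof -
  define T where "T = \<beta> / 2"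
  define bs where "bs = map x [j..<Suc q]"
  have "complex_of_real \<tau> * dd_exp (-\<tau>) bs * dd_exp (-(\<beta> - \<tau>)) (map x [0..<Suc j]) =
      (\<Sum>r=0..j. dd_cexp (- of_real T) (map x [0..<Suc r]) *
         (of_real \<tau> * dd_cexp (- of_real \<tau>) bs * dd_cexp (of_real \<tau> - of_real T) (map x [r..<Suc j])))"
    for \<tau>
  proof -
    have "complex_of_real (-(\<beta> - \<tau>)) = - of_real T + (of_real \<tau> - of_real T)"
      by (simp add: T_def)
    then show ?thesis
      using dd_cexp_add[of 0 j "- of_real T" "of_real \<tau> - of_real T" x]
      by (simp add: dd_exp_eq_dd_cexp sum_distrib_left algebra_simps del: upt_Suc)
  qed
  then have "integral {0..T} (\<lambda>\<tau>. complex_of_real \<tau> * dd_exp (-\<tau>) bs * dd_exp (-(\<beta> - \<tau>)) (map x [0..<Suc j]))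
      = (\<Sum>r=0..j. dd_cexp (- of_real T) (map x [0..<Suc r]) * weighted_convolution bs (map x [r..<Suc j]) T)"
    by (simp add: weighted_convolution_def integral_sum integrable_continuous_interval continuous_intros
          del: upt_Suc)
  also have "\<dots> = (\<Sum>r=0..j. dd_cexp (- of_real T) (map x [0..<Suc r]) *
                      (\<Sum>m=j..q. dd_cexp (- of_real T) (map x [r..<Suc q] @ [x j, x m])))"
    using assms by (simp add: bs_def T_def weighted_convolution_upt_overlap del: upt_Suc)
  finally show ?thesis
    by (simp add: T_def bs_def dd_exp_eq_dd_cexp del: upt_Suc)
qed

end
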